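(* In a PL+C model, suppose $\sum_{h\in\mathcal U}p_h\ge\alpha k$ for some $\alpha>1$. Let $i,j\in\mathcal U$ with $i\ne j$, and let $\Pr'_{PLC}$ denote PL+C probabilities when $p_j$ is replaced by some $p_j'\in(p_j,1]$ (all other parameters unchanged). Then $$\Pr'_{PLC}(\mathcal R_{i=1})\le\Pr_{PLC}(\mathcal R_{i=1})+\frac{(\alpha e^{1-\alpha})^k}{1-(\alpha e^{1-\alpha})^k}.$$ Moreover, if at least $k+1$ of the consideration probabilities equal $1$ after the replacement, then $\Pr'_{PLC}(\mathcal R_{i=1})\le\Pr_{PLC}(\mathcal R_{i=1})$.
   Context: PL+C model: universe $\mathcal U=\{1,\dots,n\}$, fixed ranking length $k\le n$. Each item $h$ has a utility $u_h\in\mathbb R$ and a consideration probability $p_h\in(0,1]$. A consideration set $C$ is drawn by including each item independently with probability $p_h$, conditioned on $|C|\ge k$: $\Pr_C(C)=\frac{1}{z_{k,p}}\prod_{h\in C}p_h\prod_{h\notin C}(1-p_h)$ for $|C|\ge k$ (with $z_{k,p}$ the normalizing constant), and $0$ otherwise. Given $C$, a length-$k$ ranking $r$ has probability $\Pr_{PL}(r\mid C)=\prod_{t=1}^k \frac{\exp(u_{r_t})}{\sum_{h\in C\setminus\{r_1,\dots,r_{t-1}\}}\exp(u_h)}$ if all $r_t\in C$, else $0$. $\Pr_{PLC}(r)=\sum_C\Pr_C(C)\Pr_{PL}(r\mid C)$, and for a set $R$ of rankings $\Pr_{PLC}(R)=\sum_{r\in R}\Pr_{PLC}(r)$. $\mathcal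 R_{i=1}$ is the set of length-$k$ rankings with $i$ in the first position. *)

theory Defs
  imports "HOL-Analysis.Analysis"
begin

definition universe :: "nat \<Rightarrow> nat set" where
  "universe n = {1..n}"

definition cs_weight :: "nat \<Rightarrow> (nat \<Rightarrow> real) \<Rightarrow> nat set \<Rightarrow> real" where
  "cs_weight n p C = (\<Prod>h\<in>C. p h) * (\<Prod>h\<in>universe n - C. 1 - p h)"

definition cs_norm :: "nat \<Rightarrow> nat \<Rightarrow> (nat \<Rightarrow> real) \<Rightarrow> real" where
  "cs_norm n k p = (\<Sum>C\<in>{C. C \<subseteq> universe n \<and> k \<le> card C}. cs_weight n p C)"

definition cs_prob :: "nat \<Rightarrow> nat \<Rightarrow> (nat \<Rightarrow> real) \<Rightarrow> nat set \<Rightarrow> real" where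
  "cs_prob n k p C = (if C \<subseteq> universe n \<and> k \<le> card C
      then cs_weight n p C / cs_norm n k p else 0)"

definition pl_prob :: "(nat \<Rightarrow> real) \<Rightarrow> nat set \<Rightarrow> nat list \<Rightarrow> real" where
  "pl_prob u C r = (if set r \<subseteq> C
      then (\<Prod>t<length r. exp (u (r ! t)) / (\<Sum>h\<in>C - set (take t r). exp (u h)))
      else 0)"

definition rankings :: "nat \<Rightarrow> nat \<Rightarrow> nat list set" where
  "rankings n k = {r. length r = k \<and> distinct r \<and> set r \<subseteq> universe n}"

definition rankings_first :: "nat \<Rightarrow> nat \<Rightarrow> nat \<Rightarrow> nat list set" where
  "rankings_first n k i = {r \<in> rankings n k. r ! 0 = i}"

definition plc_prob :: "nat \<Rightarrow> nat \<Rightarrow> (nat \<Rightarrow> real) \<Rightarrow> (nat \<Rightarrow> real) \<Rightarrow> nat list \<Rightarrow> real" where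
  "plc_prob n k u p r = (\<Sum>C\<in>Pow (universe n). cs_prob n k p C * pl_prob u C r)"

definition plc_prob_set :: "nat \<Rightarrow> nat \<Rightarrow> (nat \<Rightarrow> real) \<Rightarrow> (nat \<Rightarrow> real) \<Rightarrow> nat list set \<Rightarrow> real" where
  "plc_prob_set n k u p R = (\<Sum>r\<in>R. plc_prob n k u p r)"

end

theory Submission
  imports Defs
begin

text \<open>Let C be the random subset of the universe containing each h independently with probability
p h, let z = P(card C \<ge> k), and let s(C) be the Plackett--Luce probability that i is ranked first
among C. Summing the PL probabilities over the remaining positions gives
Pr(i first) = E[1(card C \<ge> k) s(C)] / z. Raising p j increases z, and since adding j to C can only
lower s(C) it decreases E[s(C)]; dropping the indicator costs at most 1 - z. Hence
Pr'(i first) \<le> Pr(i first) + (1 - z) / z. A Chernoff bound gives 1 - z \<le> (\<alpha> exp (1 - \<alpha>)) ^ k,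
and if k + 1 items are certain to be considered after the update, at least k were before, so z = 1.\<close>

lemma pl_prob_Cons:
  assumes "x \<in> C" "x \<notin> set r"
  shows "pl_prob u C (x # r) = exp (u x) / (\<Sum>h\<in>C. exp (u h)) * pl_prob u (C - {x}) r"
proof -
  have "set (x # r) \<subseteq> C \<longleftrightarrow> set r \<subseteq> C - {x}"
    using assms by auto
  then show ?thesis
    unfolding pl_prob_def
    by (simp add: prod.lessThan_Suc_shift set_diff_eq Diff_insert2[symmetric] del: prod.lessThan_Suc)
qed

definition distinct_lists :: "'a set \<Rightarrow> nat \<Rightarrow> 'a list set" where
  "distinct_lists C m = {r. length r = m \<and> distinct r \<and> set r \<subseteq> C}"

lemma finite_distinct_lists: "finite C \<Longrightarrow> finite (distinct_lists C m)"
  unfolding distinct_lists_def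
  by (rule finite_subset[OF _ finite_lists_length_eq[of C m]]) auto

lemma distinct_lists_Suc:
  "distinct_lists C (Suc m) = (\<lambda>(x, r). x # r) ` (SIGMA x:C. distinct_lists (C - {x}) m)"
  unfolding distinct_lists_def by (auto simp: length_Suc_conv image_iff)

lemma sum_pl_prob_distinct_lists:
  "finite C \<Longrightarrow> m \<le> card C \<Longrightarrow> (\<Sum>r\<in>distinct_lists C m. pl_prob u C r) = 1"
proof (induction m arbitrary: C)
  case 0
  have "distinct_lists C 0 = {[]}"
    by (auto simp: distinct_lists_def)
  then show ?case
    by (simp add: pl_prob_def)
next
  case (Suc m)
  have "C \<noteq> {}"
    using Suc.prems by auto
  then have total_pos: "0 < (\<Sum>h\<in>C. exp (u h))"
    using Suc.prems by (intro sum_pos) auto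
  have inj: "inj_on (\<lambda>(x, r). x # r) (SIGMA x:C. distinct_lists (C - {x}) m)"
    by (auto simp: inj_on_def)
  have "(\<Sum>r\<in>distinct_lists C (Suc m). pl_prob u C r)
      = (\<Sum>x\<in>C. \<Sum>r\<in>distinct_lists (C - {x}) m. pl_prob u C (x # r))"
    unfolding distinct_lists_Suc sum.reindex[OF inj]
    using Suc.prems by (simp add: sum.Sigma finite_distinct_lists case_prod_unfold)
  also have "\<dots> = (\<Sum>x\<in>C. exp (u x) / (\<Sum>h\<in>C. exp (u h)))"
  proof (rule sum.cong[OF refl])
    fix x assume x: "x \<in> C"
    have "pl_prob u C (x # r) = exp (u x) / (\<Sum>h\<in>C. exp (u h)) * pl_prob u (C - {x}) r"
      if "r \<in> distinct_lists (C - {x}) m" for r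
      using x that by (intro pl_prob_Cons) (auto simp: distinct_lists_def)
    then have "(\<Sum>r\<in>distinct_lists (C - {x}) m. pl_prob u C (x # r))
        = exp (u x) / (\<Sum>h\<in>C. exp (u h)) * (\<Sum>r\<in>distinct_lists (C - {x}) m. pl_prob u (C - {x}) r)"
      by (simp add: sum_distrib_left)
    also have "(\<Sum>r\<in>distinct_lists (C - {x}) m. pl_prob u (C - {x}) r) = 1"
      using Suc.prems x by (intro Suc.IH) auto
    finally show "(\<Sum>r\<in>distinct_lists (C - {x}) m. pl_prob u C (x # r)) = exp (u x) / (\<Sum>h\<in>C. exp (u h))"
      by simp
  qed
  also have "\<dots> = 1"
    using total_pos by (simp add: sum_divide_distrib[symmetric])
  finally show ?case .
qed

definition pl_first_prob :: "('a \<Rightarrow> real) \<Rightarrow> 'a set \<Rightarrow> 'a \<Rightarrow> real" where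
  "pl_first_prob u C i = (if i \<in> C then exp (u i) / (\<Sum>h\<in>C. exp (u h)) else 0)"

lemma pl_first_prob_nonneg: "0 \<le> pl_first_prob u C i"
  by (simp add: pl_first_prob_def sum_nonneg)

lemma pl_first_prob_le_one:
  assumes "finite C"
  shows "pl_first_prob u C i \<le> 1"
proof (cases "i \<in> C")
  case True
  then have "exp (u i) \<le> (\<Sum>h\<in>C. exp (u h))"
    using assms by (intro member_le_sum) auto
  moreover have "0 < (\<Sum>h\<in>C. exp (u h))"
    using calculation exp_gt_zero less_le_trans by blast
  ultimately show ?thesis
    using True by (simp add: pl_first_prob_def)
qed (simp add: pl_first_prob_def)

lemma pl_first_prob_insert_le:
  assumes "finite D" "i \<noteq> j"
  shows "pl_first_prob u (insert j D) i \<le> pl_first_prob u D i"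
proof (cases "i \<in> D \<and> j \<notin> D")
  case True
  then have "0 < (\<Sum>h\<in>D. exp (u h))"
    using assms by (intro sum_pos) auto
  then have "exp (u i) / (exp (u j) + (\<Sum>h\<in>D. exp (u h))) \<le> exp (u i) / (\<Sum>h\<in>D. exp (u h))"
    by (intro divide_left_mono mult_pos_pos add_pos_pos) auto
  then show ?thesis
    using True assms by (simp add: pl_first_prob_def)
qed (use assms in \<open>auto simp: pl_first_prob_def insert_absorb\<close>)

lemma sum_pl_prob_rankings_first:
  assumes "C \<subseteq> universe n" "1 \<le> k" "k \<le> card C"
  shows "(\<Sum>r\<in>rankings_first n k i. pl_prob u C r) = pl_first_prob u C i"
proof -
  obtain m where k: "k = Suc m"
    using assms(2) by (cases k) auto
  have "finite C"
    using assms(1) finite_subset by (auto simp: universe_def)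
  have "finite (rankings_first n k i)"
    unfolding rankings_first_def rankings_def universe_def
    by (rule finite_subset[OF _ finite_lists_length_eq[of "{1..n}" k]]) auto
  then have "(\<Sum>r\<in>rankings_first n k i. pl_prob u C r)
      = (\<Sum>r\<in>{r \<in> rankings_first n k i. set r \<subseteq> C}. pl_prob u C r)"
    by (simp add: sum.inter_filter pl_prob_def)
  also have "{r \<in> rankings_first n k i. set r \<subseteq> C}
      = (if i \<in> C then (#) i ` distinct_lists (C - {i}) m else {})"
    using assms(1)
    by (auto simp: rankings_first_def rankings_def distinct_lists_def k length_Suc_conv image_iff)
      (use assms(1) in auto)
  also have "(\<Sum>r\<in>(if i \<in> C then (#) i ` distinct_lists (C - {i}) m else {}). pl_prob u C r)
      = pl_first_prob u C i"
  proof (cases "i \<in> C")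
    case True
    have "pl_prob u C (i # r) = exp (u i) / (\<Sum>h\<in>C. exp (u h)) * pl_prob u (C - {i}) r"
      if "r \<in> distinct_lists (C - {i}) m" for r
      using True that by (intro pl_prob_Cons) (auto simp: distinct_lists_def)
    then have "(\<Sum>r\<in>(#) i ` distinct_lists (C - {i}) m. pl_prob u C r)
        = exp (u i) / (\<Sum>h\<in>C. exp (u h)) * (\<Sum>r\<in>distinct_lists (C - {i}) m. pl_prob u (C - {i}) r)"
      by (simp add: sum.reindex sum_distrib_left)
    also have "(\<Sum>r\<in>distinct_lists (C - {i}) m. pl_prob u (C - {i}) r) = 1"
      using True \<open>finite C\<close> assms(3) k by (intro sum_pl_prob_distinct_lists) auto
    finally show ?thesis
      using True by (simp add: pl_first_prob_def)
  qed (simp add: pl_first_prob_def)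
  finally show ?thesis .
qed

text \<open>\<open>subset_expect A p F\<close> is the expectation of \<open>F C\<close> for the random \<open>C \<subseteq> A\<close> containing each
  \<open>h\<close> independently with probability \<open>p h\<close>.\<close>

definition subset_weight :: "'a set \<Rightarrow> ('a \<Rightarrow> real) \<Rightarrow> 'a set \<Rightarrow> real" where
  "subset_weight A p C = (\<Prod>h\<in>C. p h) * (\<Prod>h\<in>A - C. 1 - p h)"

definition subset_expect :: "'a set \<Rightarrow> ('a \<Rightarrow> real) \<Rightarrow> ('a set \<Rightarrow> real) \<Rightarrow> real" where
  "subset_expect A p F = (\<Sum>C\<in>Pow A. subset_weight A p C * F C)"

lemma subset_weight_nonneg:
  "\<forall>h\<in>A. 0 \<le> p h \<and> p h \<le> 1 \<Longrightarrow> C \<subseteq> A \<Longrightarrow> 0 \<le> subset_weight A p C"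
  unfolding subset_weight_def by (intro mult_nonneg_nonneg prod_nonneg) auto

lemma subset_expect_power_card:
  "finite A \<Longrightarrow> subset_expect A p (\<lambda>C. t ^ card C) = (\<Prod>h\<in>A. p h * t + (1 - p h))"
  unfolding subset_expect_def subset_weight_def
  by (simp add: prod_add prod.distrib mult.assoc mult.commute mult.left_commute)

lemma subset_expect_one: "finite A \<Longrightarrow> subset_expect A p (\<lambda>_. 1) = 1"
  using subset_expect_power_card[of A p 1] by simp

lemma subset_expect_diff:
  "subset_expect A p (\<lambda>C. F C - G C) = subset_expect A p F - subset_expect A p G"
  unfolding subset_expect_def by (simp add: right_diff_distrib sum_subtractf)

lemma subset_expect_minus:
  "subset_expect A p (\<lambda>C. - F C) = - subset_expect A p F"
  unfolding subset_expect_def by (simp add: sum_negf)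

lemma subset_expect_cmult:
  "subset_expect A p (\<lambda>C. c * F C) = c * subset_expect A p F"
  unfolding subset_expect_def by (simp add: sum_distrib_left mult.left_commute)

lemma subset_expect_mono:
  assumes "\<forall>h\<in>A. 0 \<le> p h \<and> p h \<le> 1" "\<And>C. C \<subseteq> A \<Longrightarrow> F C \<le> G C"
  shows "subset_expect A p F \<le> subset_expect A p G"
  unfolding subset_expect_def
  using assms by (intro sum_mono mult_left_mono) (auto intro: subset_weight_nonneg)

lemma subset_expect_nonneg:
  assumes "\<forall>h\<in>A. 0 \<le> p h \<and> p h \<le> 1" "\<And>C. C \<subseteq> A \<Longrightarrow> 0 \<le> F C"
  shows "0 \<le> subset_expect A p F"
  unfolding subset_expect_def
  using assms by (intro sum_nonneg mult_nonneg_nonneg) (auto intro: subset_weight_nonneg)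

lemma subset_expect_fun_upd:
  "j \<notin> A \<Longrightarrow> subset_expect A (p(j := x)) F = subset_expect A p F"
  unfolding subset_expect_def subset_weight_def
  by (intro sum.cong refl arg_cong2[where f = "(*)"] prod.cong) auto

lemma subset_expect_insert:
  assumes "finite A" "j \<notin> A"
  shows "subset_expect (insert j A) p F
    = subset_expect A p (\<lambda>D. p j * F (insert j D) + (1 - p j) * F D)"
proof -
  have weight_out: "subset_weight (insert j A) p D = (1 - p j) * subset_weight A p D"
    and weight_in: "subset_weight (insert j A) p (insert j D) = p j * subset_weight A p D"
    if "D \<subseteq> A" for D
  proof -
    have "insert j A - D = insert j (A - D)" "insert j A - insert j D = A - D" "j \<notin> D"
      using that assms(2) by auto
    then show "subset_weight (insert j A) p D = (1 - p j) * subset_weight A p D"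
      and "subset_weight (insert j A) p (insert j D) = p j * subset_weight A p D"
      unfolding subset_weight_def using assms that by (simp_all add: finite_subset)
  qed
  have "inj_on (insert j) (Pow A)" "Pow A \<inter> insert j ` Pow A = {}"
    using assms(2) by (auto simp: inj_on_def)
  then have "subset_expect (insert j A) p F
      = (\<Sum>D\<in>Pow A. subset_weight (insert j A) p D * F D
                    + subset_weight (insert j A) p (insert j D) * F (insert j D))"
    unfolding subset_expect_def Pow_insert
    using assms(1) by (simp add: sum.union_disjoint sum.reindex sum.distrib)
  also have "\<dots> = subset_expect A p (\<lambda>D. p j * F (insert j D) + (1 - p j) * F D)"
    unfolding subset_expect_def
    by (rule sum.cong[OF refl]) (simp add: weight_out weight_in algebra_simps)
  finally show ?thesis .
qed

lemma subset_expect_mono_prob: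
  assumes "finite A" "j \<in> A" "\<forall>h\<in>A. 0 \<le> p h \<and> p h \<le> 1" "a \<le> b"
    and "\<And>D. D \<subseteq> A - {j} \<Longrightarrow> F D \<le> F (insert j D)"
  shows "subset_expect A (p(j := a)) F \<le> subset_expect A (p(j := b)) F"
proof -
  have expand: "subset_expect A (p(j := c)) F
      = subset_expect (A - {j}) p (\<lambda>D. c * F (insert j D) + (1 - c) * F D)" for c
  proof -
    have "subset_expect A (p(j := c)) F = subset_expect (insert j (A - {j})) (p(j := c)) F"
      by (simp only: insert_Diff[OF assms(2)])
    also have "\<dots> = subset_expect (A - {j}) p (\<lambda>D. c * F (insert j D) + (1 - c) * F D)"
      by (subst subset_expect_insert) (simp_all add: assms(1) subset_expect_fun_upd)
    finally show ?thesis .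
  qed
  have "a * F (insert j D) + (1 - a) * F D \<le> b * F (insert j D) + (1 - b) * F D"
    if "D \<subseteq> A - {j}" for D
  proof -
    have "0 \<le> (b - a) * (F (insert j D) - F D)"
      using assms(4,5) that by simp
    then show ?thesis
      by (simp add: algebra_simps)
  qed
  then show ?thesis
    unfolding expand using assms(3) by (intro subset_expect_mono) auto
qed

text \<open>Markov's inequality for \<open>t ^ card C\<close> with \<open>t = 1 / \<alpha>\<close>, followed by \<open>1 + x \<le> exp x\<close>.\<close>
lemma subset_expect_card_less_le:
  fixes \<alpha> :: real
  assumes "finite A" "\<forall>h\<in>A. 0 \<le> p h \<and> p h \<le> 1" "\<alpha> > 1" "\<alpha> * real k \<le> (\<Sum>h\<in>A. p h)"
  shows "subset_expect A p (\<lambda>C. of_bool (card C < k)) \<le> (\<alpha> * exp (1 - \<alpha>)) ^ k"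
proof -
  define t where "t = 1 / \<alpha>"
  have t: "0 < t" "t < 1"
    using assms(3) by (auto simp: t_def)
  have "of_bool (card C < k) \<le> \<alpha> ^ k * t ^ card C" for C :: "'a set"
  proof (cases "card C < k")
    case True
    then have "\<alpha> ^ card C \<le> \<alpha> ^ k"
      using assms(3) by (intro power_increasing) auto
    then show ?thesis
      using True assms(3) by (simp add: t_def power_divide)
  qed (use t assms(3) in simp)
  then have "subset_expect A p (\<lambda>C. of_bool (card C < k))
      \<le> subset_expect A p (\<lambda>C. \<alpha> ^ k * t ^ card C)"
    using assms(2) by (intro subset_expect_mono)
  also have "\<dots> = \<alpha> ^ k * (\<Prod>h\<in>A. p h * t + (1 - p h))"
    by (simp add: subset_expect_cmult subset_expect_power_card assms(1))
  also have "\<dots> \<le> \<alpha> ^ k * (\<Prod>h\<in>A. exp (p h * (t - 1)))"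
  proof (intro mult_left_mono prod_mono conjI)
    fix h assume "h \<in> A"
    then show "0 \<le> p h * t + (1 - p h)"
      using assms(2) t by auto
    show "p h * t + (1 - p h) \<le> exp (p h * (t - 1))"
      using exp_ge_add_one_self[of "p h * (t - 1)"] by (simp add: algebra_simps)
  qed (use assms(3) in auto)
  also have "\<dots> = \<alpha> ^ k * exp ((t - 1) * (\<Sum>h\<in>A. p h))"
    by (simp add: exp_sum[OF assms(1), symmetric] sum_distrib_left mult.commute)
  also have "\<dots> \<le> \<alpha> ^ k * exp ((t - 1) * (\<alpha> * real k))"
    using assms(3,4) t by (intro mult_left_mono) (auto intro: mult_left_mono_neg)
  also have "\<dots> = (\<alpha> * exp (1 - \<alpha>)) ^ k"
    using assms(3)
    by (simp add: t_def algebra_simps exp_of_nat_mult[symmetric])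
  finally show ?thesis .
qed

lemma alpha_exp_bounds:
  fixes \<alpha> :: real
  assumes "\<alpha> > 1"
  shows "0 < \<alpha> * exp (1 - \<alpha>)" "\<alpha> * exp (1 - \<alpha>) < 1"
proof -
  show "0 < \<alpha> * exp (1 - \<alpha>)"
    using assms by simp
  have "ln \<alpha> < \<alpha> - 1"
    using assms ln_le_minus_one[of \<alpha>] ln_eq_minus_one[of \<alpha>] by fastforce
  then have "exp (ln \<alpha> + (1 - \<alpha>)) < 1"
    by simp
  then show "\<alpha> * exp (1 - \<alpha>) < 1"
    using assms by (simp add: exp_add)
qed

lemma cs_norm_eq_subset_expect:
  "cs_norm n k q = subset_expect (universe n) q (\<lambda>C. of_bool (k \<le> card C))"
proof -
  have "finite (Pow (universe n))"
    by (simp add: universe_def)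
  moreover have "{C. C \<subseteq> universe n \<and> k \<le> card C} = {C \<in> Pow (universe n). k \<le> card C}"
    by auto
  ultimately show ?thesis
    unfolding cs_norm_def subset_expect_def cs_weight_def subset_weight_def
    by (simp only: sum.inter_filter) (rule sum.cong; simp)
qed

lemma one_minus_cs_norm:
  "1 - cs_norm n k q = subset_expect (universe n) q (\<lambda>C. of_bool (card C < k))"
proof -
  have "(1 - of_bool (k \<le> card C) :: real) = of_bool (card C < k)" for C :: "nat set"
    by auto
  then have "subset_expect (universe n) q (\<lambda>C. of_bool (card C < k))
      = subset_expect (universe n) q (\<lambda>C. 1 - of_bool (k \<le> card C))"
    by simp
  then show ?thesis
    by (simp add: cs_norm_eq_subset_expect subset_expect_diff subset_expect_one universe_def)
qed

lemma card_fun_upd_level_set_le: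
  assumes "finite A"
  shows "card {h \<in> A. (f(j := y)) h = c} \<le> card {h \<in> A. f h = c} + 1"
proof -
  have "card {h \<in> A. (f(j := y)) h = c} \<le> card (insert j {h \<in> A. f h = c})"
    using assms by (intro card_mono) auto
  also have "\<dots> \<le> card {h \<in> A. f h = c} + 1"
    using assms by (simp add: card_insert_if)
  finally show ?thesis .
qed

lemma cs_norm_eq_one:
  assumes "k \<le> card {h \<in> universe n. q h = 1}"
  shows "cs_norm n k q = 1"
proof -
  let ?S = "{h \<in> universe n. q h = 1}"
  have "subset_weight (universe n) q C = 0" if "C \<subseteq> universe n" "card C < k" for C
  proof -
    have "\<not> ?S \<subseteq> C"
      using that assms card_mono[of C ?S] finite_subset[of C "universe n"]
      by (force simp: universe_def)
    then obtain h where "h \<in> universe n - C" "q h = 1"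
      by auto
    then have "(\<Prod>h\<in>universe n - C. 1 - q h) = 0"
      by (intro prod_zero) (auto simp: universe_def)
    then show ?thesis
      by (simp add: subset_weight_def)
  qed
  then have "1 - cs_norm n k q = 0"
    unfolding one_minus_cs_norm subset_expect_def by (intro sum.neutral) auto
  then show ?thesis
    by simp
qed

lemma cs_norm_mono:
  assumes "\<forall>h\<in>universe n. 0 \<le> q h \<and> q h \<le> 1" "j \<in> universe n" "q j \<le> x"
  shows "cs_norm n k q \<le> cs_norm n k (q(j := x))"
proof -
  have "cs_norm n k (q(j := q j)) \<le> cs_norm n k (q(j := x))"
    unfolding cs_norm_eq_subset_expect
  proof (rule subset_expect_mono_prob)
    fix D :: "nat set"
    show "of_bool (k \<le> card D) \<le> (of_bool (k \<le> card (insert j D)) :: real)"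
      using card_insert_le[of D j] by simp
  qed (use assms in \<open>auto simp: universe_def\<close>)
  then show ?thesis
    by simp
qed

lemma plc_prob_set_rankings_first:
  assumes "1 \<le> k"
  shows "plc_prob_set n k u q (rankings_first n k i)
    = subset_expect (universe n) q (\<lambda>C. of_bool (k \<le> card C) * pl_first_prob u C i) / cs_norm n k q"
proof -
  have "cs_prob n k q C * (\<Sum>r\<in>rankings_first n k i. pl_prob u C r)
      = subset_weight (universe n) q C * (of_bool (k \<le> card C) * pl_first_prob u C i) / cs_norm n k q"
    if "C \<subseteq> universe n" for C
    using that assms sum_pl_prob_rankings_first[of C n k u i]
    by (simp add: cs_prob_def cs_weight_def subset_weight_def)
  then show ?thesis
    unfolding plc_prob_set_def plc_prob_def subset_expect_def
    by (subst sum.swap) (simp add: sum_distrib_left sum_divide_distrib)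
qed

lemma subset_expect_pl_first_prob_antimono:
  assumes "\<forall>h\<in>universe n. 0 \<le> q h \<and> q h \<le> 1" "j \<in> universe n" "i \<noteq> j" "q j \<le> x"
  shows "subset_expect (universe n) (q(j := x)) (\<lambda>C. pl_first_prob u C i)
    \<le> subset_expect (universe n) q (\<lambda>C. pl_first_prob u C i)"
proof -
  have "subset_expect (universe n) (q(j := q j)) (\<lambda>C. - pl_first_prob u C i)
      \<le> subset_expect (universe n) (q(j := x)) (\<lambda>C. - pl_first_prob u C i)"
  proof (rule subset_expect_mono_prob)
    fix D assume "D \<subseteq> universe n - {j}"
    then have "finite D"
      by (auto simp: universe_def finite_subset)
    then show "- pl_first_prob u D i \<le> - pl_first_prob u (insert j D) i"
      using assms(3) by (simp add: pl_first_prob_insert_le)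
  qed (use assms in \<open>auto simp: universe_def\<close>)
  then show ?thesis
    by (simp add: subset_expect_minus)
qed

lemma plc_prob_first_update_le:
  assumes "1 \<le> k" "\<forall>h\<in>universe n. 0 \<le> p h \<and> p h \<le> 1" "j \<in> universe n" "i \<noteq> j"
    and "p j \<le> x" "x \<le> 1" "0 < cs_norm n k p"
  shows "plc_prob_set n k u (p(j := x)) (rankings_first n k i)
    \<le> plc_prob_set n k u p (rankings_first n k i) + (1 - cs_norm n k p) / cs_norm n k p"
proof -
  let ?E = "subset_expect (universe n)"
  define f where "f = (\<lambda>C. pl_first_prob u C i)"
  define g where "g = (\<lambda>C. of_bool (k \<le> card C) * f C)"
  define z where "z = cs_norm n k p"
  define z' where "z' = cs_norm n k (p(j := x))"
  have f_bounds: "0 \<le> f C" "f C \<le> 1" if "C \<subseteq> universe n" for C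
    unfolding f_def using that
    by (auto intro: pl_first_prob_nonneg pl_first_prob_le_one finite_subset simp: universe_def)
  have updated_prob: "\<forall>h\<in>universe n. 0 \<le> (p(j := x)) h \<and> (p(j := x)) h \<le> 1"
    using assms(2,3,5,6) by force
  have "z \<le> z'"
    unfolding z_def z'_def using assms(2,3,5) by (rule cs_norm_mono)
  have "?E (p(j := x)) g \<le> ?E (p(j := x)) f"
    using updated_prob f_bounds by (intro subset_expect_mono) (auto simp: g_def)
  also have "\<dots> \<le> ?E p f"
    unfolding f_def using assms(2-5) by (rule subset_expect_pl_first_prob_antimono)
  finally have updated_le: "?E (p(j := x)) g \<le> ?E p f" .
  have "?E p f - ?E p g = ?E p (\<lambda>C. f C - g C)"
    by (simp add: subset_expect_diff)
  also have "\<dots> \<le> ?E p (\<lambda>C. of_bool (card C < k))"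
    using assms(2) f_bounds by (intro subset_expect_mono) (auto simp: g_def)
  also have "\<dots> = 1 - z"
    by (simp add: z_def one_minus_cs_norm)
  finally have lost_mass: "?E p f \<le> ?E p g + (1 - z)"
    by simp
  have "0 \<le> ?E p f"
    using assms(2) f_bounds by (intro subset_expect_nonneg) auto
  have "?E (p(j := x)) g / z' \<le> (?E p g + (1 - z)) / z'"
    using updated_le lost_mass \<open>z \<le> z'\<close> assms(7) by (intro divide_right_mono) (auto simp: z_def)
  also have "\<dots> \<le> (?E p g + (1 - z)) / z"
    using lost_mass \<open>0 \<le> ?E p f\<close> \<open>z \<le> z'\<close> assms(7) by (intro divide_left_mono) (auto simp: z_def)
  finally show ?thesis
    using assms(1) by (simp add: plc_prob_set_rankings_first g_def f_def z_def z'_def add_divide_distrib)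
qed

theorem lemma5:
  fixes n k :: nat and u p :: "nat \<Rightarrow> real" and \<alpha> pj' :: real and i j :: nat
  assumes "1 \<le> k" and "k \<le> n"
    and "\<And>h. h \<in> universe n \<Longrightarrow> 0 < p h \<and> p h \<le> 1"
    and "\<alpha> > 1"
    and "(\<Sum>h\<in>universe n. p h) \<ge> \<alpha> * real k"
    and "i \<in> universe n" and "j \<in> universe n" and "i \<noteq> j"
    and "p j < pj'" and "pj' \<le> 1"
  shows "plc_prob_set n k u (p(j := pj')) (rankings_first n k i)
           \<le> plc_prob_set n k u p (rankings_first n k i)
              + (\<alpha> * exp (1 - \<alpha>)) ^ k / (1 - (\<alpha> * exp (1 - \<alpha>)) ^ k)
         \<and> (k + 1 \<le> card {h \<in> universe n. (p(j := pj')) h = 1} \<longrightarrow>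
         plc_prob_set n k u (p(j := pj')) (rankings_first n k i)
           \<le> plc_prob_set n k u p (rankings_first n k i))"
proof -
  let ?\<delta> = "(\<alpha> * exp (1 - \<alpha>)) ^ k"
  let ?z = "cs_norm n k p"
  have probs: "\<forall>h\<in>universe n. 0 \<le> p h \<and> p h \<le> 1"
    using assms(3) by force
  have "1 - ?z \<le> ?\<delta>"
    unfolding one_minus_cs_norm using probs assms(4,5)
    by (intro subset_expect_card_less_le) (auto simp: universe_def)
  moreover have "?\<delta> < 1"
    using alpha_exp_bounds[OF assms(4)] assms(1) by (simp add: power_less_one_iff)
  ultimately have "0 < ?z" and error_le: "(1 - ?z) / ?z \<le> ?\<delta> / (1 - ?\<delta>)"
    by (auto simp: field_simps)
  have "plc_prob_set n k u (p(j := pj')) (rankings_first n k i)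
      \<le> plc_prob_set n k u p (rankings_first n k i) + (1 - ?z) / ?z"
    using plc_prob_first_update_le[OF assms(1) probs assms(7,8)] assms(9,10) \<open>0 < ?z\<close> by simp
  moreover have "?z = 1" if "k + 1 \<le> card {h \<in> universe n. (p(j := pj')) h = 1}"
    using that card_fun_upd_level_set_le[of "universe n" p j pj' 1]
    by (intro cs_norm_eq_one) (simp add: universe_def)
  ultimately show ?thesis
    using error_le by fastforce
qed

end
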